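(* Let $K$ be a field with $\operatorname{char}(K)=0$ and let $f\in K[x]$ have at least two distinct critical points and equal critical values at at most two distinct critical points. Suppose $f(x)=g(h(x))$ with $g,h\in K[x]$ and $t=\deg g>1$, and put $k=\deg h$. Then either $k\leq 2$, or \[ f'(x)=a'(x-x_0)^{k_0t-1}(x-x_1)^{k_1t-1}(kx-k_0x_1-k_1x_0) \] for some $a'\in K$, integers $k_0,k_1\geq 1$ with $k_0+k_1=k\geq 3$ and distinct $x_0,x_1\in\overline{K}$, or \[ f'(x)=a'(x-x_0)^{2t_0+1}(x-x_1)^{t_0}(x-y_0)^{2t_1+1}(x-y_1)^{t_1} \] with $a'\in K$, $\deg h=3$, integers $t_0,t_1\geq 1$ with $t_0+t_1=t-1$, and distinct $x_0,x_1,y_0,y_1\in\overline{K}$ satisfying $3x_0-y_0=2y_1$ and $3y_0-x_0=2x_1$.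
   Context: Critical points of $f$ are the roots of $f'$ in an algebraic closure $\overline{K}$, and critical values are values of $f$ at critical points. "$f$ has equal critical values at at most two distinct critical points" means there do not exist three pairwise distinct critical points $\beta_1,\beta_2,\beta_3$ of $f$ with $f(\beta_1)=f(\beta_2)=f(\beta_3)$. *)

theory Defs
  imports "HOL-Computational_Algebra.Polynomial" "HOL-Algebra.Algebraic_Closure_Type"
begin

definition crit_points :: "'a::field poly \<Rightarrow> 'a alg_closure set" where
  "crit_points f = {b. poly (map_poly to_ac (pderiv f)) b = 0}"

definition ac_eval :: "'a::field poly \<Rightarrow> 'a alg_closure \<Rightarrow> 'a alg_closure" where
  "ac_eval f b = poly (map_poly to_ac f) b"

end

theory Submission
  imports Defs
begin

text \<open>
  Over the algebraic closure, \<open>f' = g'(h) h'\<close>. For a critical point \<open>c\<close> of \<open>g\<close>, every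
  point of the fibre \<open>h\<^sup>-\<^sup>1(c)\<close> is a critical point of \<open>f\<close> with critical value \<open>g(c)\<close>, so such a
  fibre has at most two points. Since a root of \<open>h - c\<close> of multiplicity \<open>m\<close> is a root of \<open>h'\<close>
  of multiplicity \<open>m - 1\<close>, a fibre with \<open>r\<close> points accounts for \<open>k - r \<ge> k - 2\<close> of the \<open>k - 1\<close>
  roots of \<open>h'\<close> (with multiplicity, \<open>k = deg h\<close>), and distinct fibres are disjoint. Hence \<open>g\<close> has one or two critical points, and in the second case \<open>k = 3\<close>.
  With one critical point \<open>c\<close>, \<open>f' = a (h - c)\<^sup>t\<^sup>-\<^sup>1 (h - c)'\<close> where \<open>h - c\<close> has exactly two roots
  (a single one would leave \<open>f\<close> with a single critical point). With two, both \<open>h - c\<^sub>i\<close> are cubics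
  with a double root; equating their derivatives gives the two linear relations.
\<close>

lemma map_poly_to_ac_add:
  "map_poly to_ac (p + q) = map_poly to_ac p + map_poly to_ac (q :: 'a::field poly)"
  by (rule poly_eqI) (simp add: coeff_map_poly)

lemma map_poly_to_ac_mult:
  "map_poly to_ac (p * q) = map_poly to_ac p * map_poly to_ac (q :: 'a::field poly)"
  by (rule poly_eqI) (simp add: coeff_map_poly coeff_mult to_ac_sum)

lemma map_poly_to_ac_pderiv:
  "map_poly to_ac (pderiv p) = pderiv (map_poly to_ac (p :: 'a::field poly))"
  by (rule poly_eqI) (simp add: coeff_map_poly coeff_pderiv)

lemma map_poly_to_ac_pcompose:
  "map_poly to_ac (p \<circ>\<^sub>p q) = map_poly to_ac p \<circ>\<^sub>p map_poly to_ac (q :: 'a::field poly)"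
  by (induction p rule: pCons_induct)
     (simp_all add: pcompose_pCons map_poly_pCons map_poly_to_ac_add map_poly_to_ac_mult)

lemma degree_map_poly_to_ac [simp]: "degree (map_poly to_ac (p :: 'a::field poly)) = degree p"
  by (rule degree_map_poly) simp

lemma lead_coeff_map_poly_to_ac [simp]:
  "lead_coeff (map_poly to_ac (p :: 'a::field poly)) = to_ac (lead_coeff p)"
  by (simp add: coeff_map_poly)

lemma sum_order_le_degree:
  fixes p :: "'a::idom poly"
  assumes "p \<noteq> 0" "finite S"
  shows "(\<Sum>z\<in>S. order z p) \<le> degree p"
proof -
  have "(\<Sum>z\<in>S. order z p) = (\<Sum>z\<in>S \<inter> set_mset (proots p). count (proots p) z)"
    using assms by (subst sum.inter_restrict) (auto intro!: sum.cong simp: not_in_iff order_0I)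
  also have "\<dots> \<le> (\<Sum>z\<in>set_mset (proots p). count (proots p) z)"
    by (intro sum_mono2) auto
  also have "\<dots> = size (proots p)"
    by (simp add: size_multiset_overloaded_eq)
  also have "\<dots> \<le> degree p"
    by (rule size_proots_le)
  finally show ?thesis .
qed

lemma alg_closed_proots_factorization:
  fixes p :: "'a::alg_closed_field poly"
  assumes "p \<noteq> 0"
  shows "p = smult (lead_coeff p) (\<Prod>x\<in>#proots p. [:-x, 1:])"
    and "size (proots p) = degree p"
proof -
  obtain A where A: "size A = degree p" "p = smult (lead_coeff p) (\<Prod>x\<in>#A. [:-x, 1:])"
    using alg_closed_imp_factorization[OF assms] by blast
  have "proots p = proots (\<Prod>x\<in>#A. [:-x, 1:])"
    using assms by (subst A(2)) simp
  also have "\<dots> = A"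
    using proots_prod_mset[of "image_mset (\<lambda>x. [:-x, 1:]) A"]
    by (force simp: multiset.map_comp o_def)
  finally show "p = smult (lead_coeff p) (\<Prod>x\<in>#proots p. [:-x, 1:])" "size (proots p) = degree p"
    using A by simp_all
qed

lemma alg_closed_factorization_orders:
  fixes p :: "'a::alg_closed_field poly"
  assumes "p \<noteq> 0" "finite S" "{z. poly p z = 0} \<subseteq> S"
  shows "p = smult (lead_coeff p) (\<Prod>z\<in>S. [:-z, 1:] ^ order z p)"
    and "degree p = (\<Sum>z\<in>S. order z p)"
proof -
  have roots: "set_mset (proots p) \<subseteq> S"
    using assms by simp
  have "(\<Prod>x\<in>#proots p. [:-x, 1:]) = (\<Prod>z\<in>S. [:-z, 1:] ^ order z p)"
    unfolding image_prod_mset_multiplicity using assms roots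
    by (intro prod.mono_neutral_cong_left) (auto simp: order_0I)
  then show "p = smult (lead_coeff p) (\<Prod>z\<in>S. [:-z, 1:] ^ order z p)"
    using alg_closed_proots_factorization(1)[OF assms(1)] by simp
  have "size (proots p) = (\<Sum>z\<in>S. order z p)"
    unfolding size_multiset_overloaded_eq using assms roots
    by (intro sum.mono_neutral_cong_left) (auto simp: order_0I)
  then show "degree p = (\<Sum>z\<in>S. order z p)"
    using alg_closed_proots_factorization(2)[OF assms(1)] by simp
qed

lemma pcompose_linear_power: "[:-c, 1:] ^ n \<circ>\<^sub>p q = (q - [:c::'a::comm_ring_1:]) ^ n"
proof -
  have "[:-c, 1:] \<circ>\<^sub>p q = q - [:c:]"
    by (rule poly_eqI) (auto simp: pcompose_pCons coeff_pCons split: nat.split)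
  then show ?thesis
    by (induction n) (simp_all only: power_0 power_Suc pcompose_1 pcompose_mult)
qed

lemma power_mult_pderiv_two_linear_factors:
  fixes x0 x1 b :: "'a::idom"
  assumes "k0 \<ge> 1" "k1 \<ge> 1" "t \<ge> 1"
  defines "P \<equiv> smult b ([:-x0, 1:] ^ k0 * [:-x1, 1:] ^ k1)"
  shows "P ^ (t - 1) * pderiv P = smult (b ^ t) ([:-x0, 1:] ^ (k0 * t - 1) * [:-x1, 1:] ^ (k1 * t - 1) *
           [:-(of_nat k0 * x1 + of_nat k1 * x0), of_nat (k0 + k1):])"
proof -
  obtain i0 i1 s where k: "k0 = Suc i0" "k1 = Suc i1" "t = Suc s"
    using assms(1-3) by (metis Suc_le_D One_nat_def)
  define X0 X1 L where "X0 = [:-x0, 1:]" and "X1 = [:-x1, 1:]"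
    and "L = [:-(of_nat k0 * x1 + of_nat k1 * x0), of_nat (k0 + k1) :: 'a:]"
  have "pderiv (X0 ^ Suc i0 * X1 ^ Suc i1)
      = X0 ^ Suc i0 * smult (of_nat k1) (X1 ^ i1) + X1 ^ Suc i1 * smult (of_nat k0) (X0 ^ i0)"
    unfolding k pderiv_mult pderiv_power_Suc by (simp add: X0_def X1_def pderiv_pCons del: power_Suc)
  also have "\<dots> = X0 ^ i0 * X1 ^ i1 * (smult (of_nat k1) X0 + smult (of_nat k0) X1)"
    by (simp add: algebra_simps)
  also have "smult (of_nat k1) X0 + smult (of_nat k0) X1 = L"
    by (simp add: X0_def X1_def L_def algebra_simps)
  finally have "pderiv (X0 ^ Suc i0 * X1 ^ Suc i1) = X0 ^ i0 * X1 ^ i1 * L" .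
  moreover have "P = smult b (X0 ^ Suc i0 * X1 ^ Suc i1)"
    by (simp add: P_def X0_def X1_def k)
  ultimately have "P ^ (t - 1) * pderiv P = (smult b (X0 ^ Suc i0 * X1 ^ Suc i1)) ^ s * smult b (X0 ^ i0 * X1 ^ i1 * L)"
    by (simp add: k pderiv_smult)
  also have "\<dots> = smult (b ^ t) (X0 ^ (i0 + k0 * s) * X1 ^ (i1 + k1 * s) * L)"
    by (simp add: k power_add power_mult power_mult_distrib smult_power mult_ac)
  also have "X0 ^ (i0 + k0 * s) * X1 ^ (i1 + k1 * s) = X0 ^ (k0 * t - 1) * X1 ^ (k1 * t - 1)"
    using k by simp
  finally show ?thesis
    by (simp add: X0_def X1_def L_def)
qed

lemma alg_closed_single_root_factorization:
  fixes p :: "'a::alg_closed_field poly"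
  assumes "p \<noteq> 0" "{z. poly p z = 0} \<subseteq> {c}"
  shows "p = smult (lead_coeff p) ([:-c, 1:] ^ degree p)"
  using alg_closed_factorization_orders[OF assms(1) _ assms(2)] by simp

lemma alg_closed_two_roots_factorization:
  fixes p :: "'a::alg_closed_field poly"
  assumes "p \<noteq> 0" "{z. poly p z = 0} = {x0, x1}" "x0 \<noteq> x1"
  shows "p = smult (lead_coeff p) ([:-x0, 1:] ^ order x0 p * [:-x1, 1:] ^ order x1 p)"
    and "order x0 p + order x1 p = degree p"
    and "order x0 p \<ge> 1" "order x1 p \<ge> 1"
proof -
  show "p = smult (lead_coeff p) ([:-x0, 1:] ^ order x0 p * [:-x1, 1:] ^ order x1 p)"
    and "order x0 p + order x1 p = degree p"
    using alg_closed_factorization_orders[OF assms(1) _ equalityD1[OF assms(2)]] assms(3) by simp_all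
  show "order x0 p \<ge> 1" "order x1 p \<ge> 1"
    using assms(1,2) order_gt_0_iff[of p] by (auto simp: Suc_le_eq)
qed

lemma alg_closed_cubic_two_roots:
  fixes p :: "'a::alg_closed_field poly"
  assumes "degree p = 3" "card {z. poly p z = 0} = 2"
  obtains u v where "u \<noteq> v" "{z. poly p z = 0} = {u, v}"
    "p = smult (lead_coeff p) ([:-u, 1:] ^ 2 * [:-v, 1:])"
proof -
  have "p \<noteq> 0"
    using assms(1) by auto
  obtain x0 x1 where roots: "{z. poly p z = 0} = {x0, x1}" "x0 \<noteq> x1"
    using assms(2) by (auto simp: card_2_iff)
  note factors = alg_closed_two_roots_factorization[OF \<open>p \<noteq> 0\<close> roots]
  consider "order x0 p = 2" "order x1 p = 1" | "order x0 p = 1" "order x1 p = 2"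
    using factors(2-4) assms(1) by linarith
  then show ?thesis
  proof cases
    case 1
    then show ?thesis
      using that[of x0 x1] roots factors(1) by simp
  next
    case 2
    then show ?thesis
      using that[of x1 x0] roots factors(1) by (simp add: insert_commute mult.commute)
  qed
qed

lemma pderiv_cubic_double_root:
  "pderiv (smult b ([:-u, 1:] ^ 2 * [:-v, 1:])) = smult b ([:-u, 1:] * [:-(u + 2 * v), 3 :: 'a::idom:])"
  by (simp add: pderiv_smult pderiv_mult pderiv_power pderiv_pCons power2_eq_square algebra_simps)

lemma cubics_common_derivative:
  fixes b :: "'a::idom"
  assumes "pderiv (smult b ([:-u0, 1:] ^ 2 * [:-u1, 1:])) = pderiv (smult b ([:-v0, 1:] ^ 2 * [:-v1, 1:]))"
    and "b \<noteq> 0" "u0 \<noteq> v0"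
  shows "3 * u0 - v0 = 2 * v1" and "3 * v0 - u0 = 2 * u1"
    and "pderiv (smult b ([:-u0, 1:] ^ 2 * [:-u1, 1:])) = smult (3 * b) ([:-u0, 1:] * [:-v0, 1:])"
proof -
  have relation: "3 * y0 - x0 = 2 * x1"
    if "smult b ([:-x0, 1:] * [:-(x0 + 2 * x1), 3:]) = smult b ([:-y0, 1:] * [:-(y0 + 2 * y1), 3:])"
      and "x0 \<noteq> y0" for x0 x1 y0 y1 :: 'a
  proof -
    have "b * ((y0 - x0) * (3 * y0 - (x0 + 2 * x1))) = poly (smult b ([:-x0, 1:] * [:-(x0 + 2 * x1), 3:])) y0"
      by (simp add: algebra_simps)
    also have "\<dots> = 0"
      unfolding that(1) by (simp add: algebra_simps)
    finally have "3 * y0 - (x0 + 2 * x1) = 0"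
      using \<open>b \<noteq> 0\<close> that(2) by simp
    then show ?thesis
      by (simp add: algebra_simps)
  qed
  show "3 * u0 - v0 = 2 * v1" "3 * v0 - u0 = 2 * u1"
    using relation[of v0 v1 u0 u1] relation[of u0 u1 v0 v1] assms
    unfolding pderiv_cubic_double_root by auto
  then have "[:-(u0 + 2 * u1), 3:] = smult 3 [:-v0, 1:]"
    by (simp add: algebra_simps)
  then show "pderiv (smult b ([:-u0, 1:] ^ 2 * [:-u1, 1:])) = smult (3 * b) ([:-u0, 1:] * [:-v0, 1:])"
    unfolding pderiv_cubic_double_root by (simp add: mult.left_commute)
qed

lemma degree_diff_const:
  fixes p :: "'a::comm_ring poly"
  assumes "degree p > 0"
  shows "degree (p - [:c:]) = degree p" and "lead_coeff (p - [:c:]) = lead_coeff p"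
proof -
  show "degree (p - [:c:]) = degree p"
    using assms degree_add_eq_left[of "[:-c:]" p]
    by (simp add: diff_conv_add_uminus del: add_uminus_conv_diff)
  then show "lead_coeff (p - [:c:]) = lead_coeff p"
    using assms by (simp add: coeff_pCons split: nat.split)
qed

lemma card_fibre_add_sum_order_pderiv:
  fixes p :: "'a::{alg_closed_field, field_char_0} poly"
  assumes "degree p > 0"
  shows "card {z. poly p z = c} + (\<Sum>z\<in>{z. poly p z = c}. order z (pderiv p)) = degree p"
proof -
  define q where "q = p - [:c:]"
  have degree_q: "degree q = degree p"
    using degree_diff_const(1)[OF assms] by (simp add: q_def)
  then have "q \<noteq> 0"
    using assms by auto
  have roots_q: "{z. poly q z = 0} = {z. poly p z = c}"
    by (simp add: q_def)
  have "degree p = (\<Sum>z\<in>{z. poly p z = c}. order z q)"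
    using alg_closed_factorization_orders(2)[OF \<open>q \<noteq> 0\<close> poly_roots_finite[OF \<open>q \<noteq> 0\<close>]] degree_q roots_q
    by simp
  also have "\<dots> = (\<Sum>z\<in>{z. poly p z = c}. Suc (order z (pderiv p)))"
    using order_pderiv[OF \<open>q \<noteq> 0\<close>] by (intro sum.cong) (auto simp: q_def pderiv_diff)
  also have "\<dots> = card {z. poly p z = c} + (\<Sum>z\<in>{z. poly p z = c}. order z (pderiv p))"
    by (simp add: sum_Suc)
  finally show ?thesis ..
qed

lemma sum_fibre_defects_le:
  fixes p :: "'a::{alg_closed_field, field_char_0} poly"
  assumes "degree p > 0" "finite C"
  shows "(\<Sum>c\<in>C. degree p - card {z. poly p z = c}) \<le> degree p - 1"
proof -
  have "pderiv p \<noteq> 0"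
    using assms(1) by (simp add: pderiv_eq_0_iff)
  have finite_fibre: "finite {z. poly p z = c}" for c
    using poly_roots_finite[of "p - [:c:]"] assms(1) by (cases "p = [:c:]") auto
  have "(\<Sum>c\<in>C. degree p - card {z. poly p z = c})
      = (\<Sum>c\<in>C. \<Sum>z\<in>{z. poly p z = c}. order z (pderiv p))"
    by (intro sum.cong refl) (metis card_fibre_add_sum_order_pderiv[OF assms(1)] add_diff_cancel_left')
  also have "\<dots> = (\<Sum>z\<in>(\<Union>c\<in>C. {z. poly p z = c}). order z (pderiv p))"
    using assms(2) finite_fibre by (subst sum.UNION_disjoint) auto
  also have "\<dots> \<le> degree (pderiv p)"
    using assms(2) finite_fibre by (intro sum_order_le_degree \<open>pderiv p \<noteq> 0\<close>) auto
  finally show ?thesis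
    by (simp add: degree_pderiv)
qed

lemma poly_pderiv_pcompose:
  "poly (pderiv (p \<circ>\<^sub>p q)) z = poly (pderiv p) (poly q z) * poly (pderiv q) z"
  by (simp add: pderiv_pcompose poly_pcompose)

locale critical_decomposition =
  fixes G H :: "'a::{alg_closed_field, field_char_0} poly"
  assumes degree_G: "degree G > 1"
    and degree_H: "degree H \<ge> 3"
    and two_critical_points:
      "\<exists>b1 b2. b1 \<noteq> b2 \<and> poly (pderiv (G \<circ>\<^sub>p H)) b1 = 0 \<and> poly (pderiv (G \<circ>\<^sub>p H)) b2 = 0"
    and critical_value_at_most_twice:
      "\<lbrakk>poly (pderiv (G \<circ>\<^sub>p H)) b1 = 0; poly (pderiv (G \<circ>\<^sub>p H)) b2 = 0;
        poly (pderiv (G \<circ>\<^sub>p H)) b3 = 0;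
        poly (G \<circ>\<^sub>p H) b1 = poly (G \<circ>\<^sub>p H) b2; poly (G \<circ>\<^sub>p H) b1 = poly (G \<circ>\<^sub>p H) b3\<rbrakk>
       \<Longrightarrow> b1 = b2 \<or> b1 = b3 \<or> b2 = b3"
begin

lemma pderiv_G_nonzero: "pderiv G \<noteq> 0"
  using degree_G by (simp add: pderiv_eq_0_iff)

lemma pderiv_H_nonzero: "pderiv H \<noteq> 0"
  using degree_H by (simp add: pderiv_eq_0_iff)

lemma card_fibre_le_2:
  assumes "poly (pderiv G) c = 0"
  shows "card {z. poly H z = c} \<le> 2"
proof (rule ccontr)
  assume "\<not> ?thesis"
  then obtain T where "T \<subseteq> {z. poly H z = c}" "card T = 3"
    by (metis obtain_subset_with_card_n not_le Suc_leI numeral_2_eq_2 numeral_3_eq_3)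
  then obtain x y z where "distinct [x, y, z]" "poly H x = c" "poly H y = c" "poly H z = c"
    by (auto simp: card_3_iff)
  then show False
    using critical_value_at_most_twice[of x y z] assms
    by (simp add: poly_pderiv_pcompose poly_pcompose)
qed

lemma card_critical_points_G_mult_le:
  "card {c. poly (pderiv G) c = 0} * (degree H - 2) \<le> degree H - 1"
proof -
  let ?C = "{c. poly (pderiv G) c = 0}"
  have "card ?C * (degree H - 2) = (\<Sum>c\<in>?C. degree H - 2)"
    by simp
  also have "\<dots> \<le> (\<Sum>c\<in>?C. degree H - card {z. poly H z = c})"
    using card_fibre_le_2 by (intro sum_mono diff_le_mono2) auto
  also have "\<dots> \<le> degree H - 1"
    using degree_H poly_roots_finite[OF pderiv_G_nonzero] by (intro sum_fibre_defects_le) auto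
  finally show ?thesis .
qed

lemma critical_points_G_cases:
  obtains c where "{c. poly (pderiv G) c = 0} = {c}"
  | c1 c2 where "{c. poly (pderiv G) c = 0} = {c1, c2}" "c1 \<noteq> c2" "degree H = 3"
proof -
  let ?C = "{c. poly (pderiv G) c = 0}"
  have "degree (pderiv G) > 0"
    using degree_G by (simp add: degree_pderiv)
  then obtain c where "c \<in> ?C"
    using alg_closed_imp_poly_has_root by blast
  then have "card ?C \<ge> 1"
    using poly_roots_finite[OF pderiv_G_nonzero] by (simp add: Suc_le_eq card_gt_0_iff) blast
  moreover have "card ?C \<le> 2"
  proof (rule ccontr)
    assume "\<not> card ?C \<le> 2"
    then have "3 * (degree H - 2) \<le> card ?C * (degree H - 2)"
      by (intro mult_right_mono) auto
    then show False
      using card_critical_points_G_mult_le degree_H by linarith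
  qed
  ultimately consider "card ?C = 1" | "card ?C = 2"
    by linarith
  then show ?thesis
  proof cases
    case 1
    then show ?thesis
      using that(1) by (auto simp: card_1_singleton_iff)
  next
    case 2
    then have "degree H = 3"
      using card_critical_points_G_mult_le degree_H by simp
    with 2 show ?thesis
      using that(2) by (auto simp: card_2_iff)
  qed
qed

lemma fibre_nonempty: "\<exists>z. poly H z = c"
proof -
  have "degree (H - [:c:]) > 0"
    using degree_diff_const(1)[of H c] degree_H by simp
  then obtain z where "poly (H - [:c:]) z = 0"
    using alg_closed_imp_poly_has_root by blast
  then show ?thesis
    by auto
qed

lemma finite_fibre: "finite {z. poly H z = c}"
proof -
  have "H - [:c:] \<noteq> 0"
    using degree_H by auto
  then show ?thesis
    using poly_roots_finite[of "H - [:c:]"] by simp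
qed

lemma card_fibre_single_critical_point:
  assumes C: "{c. poly (pderiv G) c = 0} = {c}"
  shows "card {z. poly H z = c} = 2"
proof -
  have "card {z. poly H z = c} \<noteq> 1"
  proof
    assume "card {z. poly H z = c} = 1"
    then obtain x0 where fibre: "{z. poly H z = c} = {x0}"
      by (auto simp: card_1_singleton_iff)
    have order_x0: "order x0 (pderiv H) = degree (pderiv H)"
      using card_fibre_add_sum_order_pderiv[of H c] degree_H fibre by (simp add: degree_pderiv)
    have "z = x0" if "poly (pderiv H) z = 0" for z
    proof (rule ccontr)
      assume "z \<noteq> x0"
      then have "order x0 (pderiv H) + order z (pderiv H) \<le> degree (pderiv H)"
        using sum_order_le_degree[OF pderiv_H_nonzero, of "{x0, z}"] by simp
      then show False
        using order_x0 that pderiv_H_nonzero order_gt_0_iff[of "pderiv H" z] by simp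
    qed
    then have "z = x0" if "poly (pderiv (G \<circ>\<^sub>p H)) z = 0" for z
      using that C fibre by (auto simp: poly_pderiv_pcompose)
    then show False
      using two_critical_points by blast
  qed
  moreover have "card {z. poly H z = c} \<noteq> 0"
    using fibre_nonempty[of c] finite_fibre[of c] by auto
  moreover have "card {z. poly H z = c} \<le> 2"
    using C card_fibre_le_2 by blast
  ultimately show ?thesis
    by linarith
qed

lemma pderiv_composition_single_critical_point:
  assumes C: "{c. poly (pderiv G) c = 0} = {c}"
  shows "\<exists>k0 k1 x0 x1. k0 \<ge> 1 \<and> k1 \<ge> 1 \<and> k0 + k1 = degree H \<and> x0 \<noteq> x1 \<and>
           pderiv (G \<circ>\<^sub>p H) = smult (lead_coeff (pderiv G) * lead_coeff H ^ degree G)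
             ([:-x0, 1:] ^ (k0 * degree G - 1) * [:-x1, 1:] ^ (k1 * degree G - 1) *
              [:-(of_nat k0 * x1 + of_nat k1 * x0), of_nat (degree H):])"
proof -
  define P where "P = H - [:c:]"
  have P: "degree P = degree H" "lead_coeff P = lead_coeff H" "pderiv P = pderiv H"
    using degree_diff_const[of H c] degree_H by (simp_all add: P_def pderiv_diff)
  then have "P \<noteq> 0"
    using degree_H by auto
  obtain x0 x1 where fibre: "{z. poly P z = 0} = {x0, x1}" "x0 \<noteq> x1"
    using card_fibre_single_critical_point[OF C] by (auto simp: P_def card_2_iff)
  define k0 k1 where "k0 = order x0 P" and "k1 = order x1 P"
  note P_factors = alg_closed_two_roots_factorization[OF \<open>P \<noteq> 0\<close> fibre, folded k0_def k1_def]
  have "pderiv G = smult (lead_coeff (pderiv G)) ([:-c, 1:] ^ (degree G - 1))"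
    using alg_closed_single_root_factorization[OF pderiv_G_nonzero] C by (simp add: degree_pderiv)
  then have "pderiv (G \<circ>\<^sub>p H) = smult (lead_coeff (pderiv G)) (P ^ (degree G - 1) * pderiv P)"
    unfolding pderiv_pcompose P(3)
    by (metis P_def pcompose_smult pcompose_linear_power mult_smult_left)
  also have "P ^ (degree G - 1) * pderiv P = smult (lead_coeff H ^ degree G)
      ([:-x0, 1:] ^ (k0 * degree G - 1) * [:-x1, 1:] ^ (k1 * degree G - 1) *
       [:-(of_nat k0 * x1 + of_nat k1 * x0), of_nat (k0 + k1):])"
  proof -
    have "P = smult (lead_coeff H) ([:-x0, 1:] ^ k0 * [:-x1, 1:] ^ k1)"
      using P_factors(1) unfolding P(2) .
    then show ?thesis
      using P_factors(3,4) degree_G by (simp only: power_mult_pderiv_two_linear_factors less_imp_le)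
  qed
  finally show ?thesis
    using P_factors(2-4) P(1) fibre(2) by auto
qed

lemma fibres_two_critical_points:
  assumes C: "{c. poly (pderiv G) c = 0} = {c1, c2}" "c1 \<noteq> c2" and cubic: "degree H = 3"
  obtains x0 x1 y0 y1 where "distinct [x0, x1, y0, y1]" "3 * x0 - y0 = 2 * y1" "3 * y0 - x0 = 2 * x1"
    "H - [:c1:] = smult (lead_coeff H) ([:-x0, 1:] ^ 2 * [:-x1, 1:])"
    "H - [:c2:] = smult (lead_coeff H) ([:-y0, 1:] ^ 2 * [:-y1, 1:])"
    "pderiv H = smult (3 * lead_coeff H) ([:-x0, 1:] * [:-y0, 1:])"
proof -
  let ?b = "lead_coeff H"
  have "(\<Sum>c\<in>{c1, c2}. 3 - card {z. poly H z = c}) \<le> 2"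
    using sum_fibre_defects_le[of H "{c1, c2}"] cubic by simp
  moreover have "poly (pderiv G) c1 = 0" "poly (pderiv G) c2 = 0"
    using C(1) by (simp_all add: set_eq_iff)
  ultimately have cards: "card {z. poly H z = c1} = 2" "card {z. poly H z = c2} = 2"
    using card_fibre_le_2[of c1] card_fibre_le_2[of c2] C(2) by auto
  have shifted: "degree (H - [:c:]) = 3" "lead_coeff (H - [:c:]) = ?b" "pderiv (H - [:c:]) = pderiv H" for c
    using degree_diff_const[of H c] cubic by (simp_all add: pderiv_diff)
  obtain x0 x1 where X: "x0 \<noteq> x1" "{z. poly H z = c1} = {x0, x1}"
      "H - [:c1:] = smult ?b ([:-x0, 1:] ^ 2 * [:-x1, 1:])"
    by (rule alg_closed_cubic_two_roots[of "H - [:c1:]"]) (use shifted cards in auto)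
  obtain y0 y1 where Y: "y0 \<noteq> y1" "{z. poly H z = c2} = {y0, y1}"
      "H - [:c2:] = smult ?b ([:-y0, 1:] ^ 2 * [:-y1, 1:])"
    by (rule alg_closed_cubic_two_roots[of "H - [:c2:]"]) (use shifted cards in auto)
  have "poly H x0 = c1" "poly H x1 = c1" "poly H y0 = c2" "poly H y1 = c2"
    using X(2) Y(2) by blast+
  then have "distinct [x0, x1, y0, y1]"
    using X(1) Y(1) C(2) by auto
  have "pderiv (smult ?b ([:-x0, 1:] ^ 2 * [:-x1, 1:])) = pderiv (smult ?b ([:-y0, 1:] ^ 2 * [:-y1, 1:]))"
    using shifted(3) unfolding X(3)[symmetric] Y(3)[symmetric] by simp
  moreover have "?b \<noteq> 0"
    using cubic by (metis leading_coeff_0_iff degree_0 zero_neq_numeral)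
  moreover have "x0 \<noteq> y0"
    using \<open>distinct [x0, x1, y0, y1]\<close> by simp
  ultimately have common: "3 * x0 - y0 = 2 * y1" "3 * y0 - x0 = 2 * x1"
      "pderiv (smult ?b ([:-x0, 1:] ^ 2 * [:-x1, 1:])) = smult (3 * ?b) ([:-x0, 1:] * [:-y0, 1:])"
    by (rule cubics_common_derivative)+
  have "pderiv H = smult (3 * ?b) ([:-x0, 1:] * [:-y0, 1:])"
    using common(3) shifted(3)[of c1] unfolding X(3) by simp
  with \<open>distinct [x0, x1, y0, y1]\<close> common(1,2) X(3) Y(3) show ?thesis
    using that by blast
qed

lemma pderiv_composition_two_critical_points:
  assumes C: "{c. poly (pderiv G) c = 0} = {c1, c2}" "c1 \<noteq> c2" and cubic: "degree H = 3"
  shows "\<exists>t0 t1 x0 x1 y0 y1. t0 \<ge> 1 \<and> t1 \<ge> 1 \<and> t0 + t1 = degree G - 1 \<and>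
           distinct [x0, x1, y0, y1] \<and> 3 * x0 - y0 = 2 * y1 \<and> 3 * y0 - x0 = 2 * x1 \<and>
           pderiv (G \<circ>\<^sub>p H) = smult (3 * (lead_coeff (pderiv G) * lead_coeff H ^ degree G))
             ([:-x0, 1:] ^ (2 * t0 + 1) * [:-x1, 1:] ^ t0 * [:-y0, 1:] ^ (2 * t1 + 1) * [:-y1, 1:] ^ t1)"
proof -
  obtain x0 x1 y0 y1 where fibres: "distinct [x0, x1, y0, y1]" "3 * x0 - y0 = 2 * y1" "3 * y0 - x0 = 2 * x1"
    "H - [:c1:] = smult (lead_coeff H) ([:-x0, 1:] ^ 2 * [:-x1, 1:])"
    "H - [:c2:] = smult (lead_coeff H) ([:-y0, 1:] ^ 2 * [:-y1, 1:])"
    "pderiv H = smult (3 * lead_coeff H) ([:-x0, 1:] * [:-y0, 1:])"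
    using fibres_two_critical_points[OF assms] .
  define t0 t1 where "t0 = order c1 (pderiv G)" and "t1 = order c2 (pderiv G)"
  define a where "a = lead_coeff (pderiv G)"
  note G'_factors = alg_closed_two_roots_factorization[OF pderiv_G_nonzero C, folded t0_def t1_def a_def]
  have degree_G_eq: "degree G = t0 + t1 + 1"
    using G'_factors(2) degree_G by (simp add: degree_pderiv)
  have "pderiv (G \<circ>\<^sub>p H) = smult a ((H - [:c1:]) ^ t0 * (H - [:c2:]) ^ t1) * pderiv H"
    unfolding pderiv_pcompose G'_factors(1) by (simp add: pcompose_smult pcompose_mult pcompose_linear_power)
  also have "\<dots> = smult (3 * (a * lead_coeff H ^ degree G))
             ([:-x0, 1:] ^ (2 * t0 + 1) * [:-x1, 1:] ^ t0 * [:-y0, 1:] ^ (2 * t1 + 1) * [:-y1, 1:] ^ t1)"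
  proof -
    define X0 X1 Y0 Y1 where "X0 = [:-x0, 1:]" and "X1 = [:-x1, 1:]" and "Y0 = [:-y0, 1:]" and "Y1 = [:-y1, 1:]"
    show ?thesis
      unfolding fibres(4-6) degree_G_eq X0_def[symmetric] X1_def[symmetric] Y0_def[symmetric] Y1_def[symmetric]
      by (simp add: power_add power_mult power_mult_distrib smult_power power2_eq_square mult_ac)
  qed
  finally have "pderiv (G \<circ>\<^sub>p H) = smult (3 * (a * lead_coeff H ^ degree G))
      ([:-x0, 1:] ^ (2 * t0 + 1) * [:-x1, 1:] ^ t0 * [:-y0, 1:] ^ (2 * t1 + 1) * [:-y1, 1:] ^ t1)" .
  moreover have "t0 + t1 = degree G - 1"
    using degree_G_eq by simp
  ultimately show ?thesis
    using G'_factors(3,4) fibres(1-3) unfolding a_def by blast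
qed

end

lemma critical_decomposition_to_ac:
  fixes g h :: "'a::field_char_0 poly"
  assumes "\<exists>b1\<in>crit_points (g \<circ>\<^sub>p h). \<exists>b2\<in>crit_points (g \<circ>\<^sub>p h). b1 \<noteq> b2"
    and "\<not> (\<exists>b1\<in>crit_points (g \<circ>\<^sub>p h). \<exists>b2\<in>crit_points (g \<circ>\<^sub>p h). \<exists>b3\<in>crit_points (g \<circ>\<^sub>p h).
           b1 \<noteq> b2 \<and> b1 \<noteq> b3 \<and> b2 \<noteq> b3 \<and>
           ac_eval (g \<circ>\<^sub>p h) b1 = ac_eval (g \<circ>\<^sub>p h) b2 \<and> ac_eval (g \<circ>\<^sub>p h) b1 = ac_eval (g \<circ>\<^sub>p h) b3)"
    and "degree g > 1" "degree h \<ge> 3"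
  shows "critical_decomposition (map_poly to_ac g) (map_poly to_ac h)"
proof -
  let ?F = "map_poly to_ac g \<circ>\<^sub>p map_poly to_ac h"
  have critical: "crit_points (g \<circ>\<^sub>p h) = {z. poly (pderiv ?F) z = 0}"
    and evaluation: "ac_eval (g \<circ>\<^sub>p h) = poly ?F"
    by (simp_all add: crit_points_def ac_eval_def map_poly_to_ac_pcompose map_poly_to_ac_pderiv fun_eq_iff)
  show ?thesis
  proof
    show "\<exists>b1 b2. b1 \<noteq> b2 \<and> poly (pderiv ?F) b1 = 0 \<and> poly (pderiv ?F) b2 = 0"
      using assms(1) unfolding critical by blast
    show "b1 = b2 \<or> b1 = b3 \<or> b2 = b3"
      if "poly (pderiv ?F) b1 = 0" "poly (pderiv ?F) b2 = 0" "poly (pderiv ?F) b3 = 0"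
        "poly ?F b1 = poly ?F b2" "poly ?F b1 = poly ?F b3" for b1 b2 b3
      using assms(2) that unfolding critical evaluation by blast
  qed (use assms(3,4) in simp_all)
qed

theorem proposition1p4:
  fixes f g h :: "'a::field_char_0 poly"
  assumes two_crit: "\<exists>b1\<in>crit_points f. \<exists>b2\<in>crit_points f. b1 \<noteq> b2"
    and at_most_two: "\<not> (\<exists>b1\<in>crit_points f. \<exists>b2\<in>crit_points f. \<exists>b3\<in>crit_points f.
           b1 \<noteq> b2 \<and> b1 \<noteq> b3 \<and> b2 \<noteq> b3 \<and>
           ac_eval f b1 = ac_eval f b2 \<and> ac_eval f b1 = ac_eval f b3)"
    and decomp: "f = pcompose g h"
    and t_gt: "degree g > 1"
  shows "degree h \<le> 2
    \<or> (\<exists>a' k0 k1 x0 x1. k0 \<ge> 1 \<and> k1 \<ge> 1 \<and> k0 + k1 = degree h \<and> degree h \<ge> 3 \<and> x0 \<noteq> x1 \<and>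
         map_poly to_ac (pderiv f) =
           smult (to_ac a') ([:-x0, 1:] ^ (k0 * degree g - 1) * [:-x1, 1:] ^ (k1 * degree g - 1) *
             [:-(of_nat k0 * x1 + of_nat k1 * x0), of_nat (degree h):]))
    \<or> (\<exists>a' t0 t1 x0 x1 y0 y1. degree h = 3 \<and> t0 \<ge> 1 \<and> t1 \<ge> 1 \<and> t0 + t1 = degree g - 1 \<and>
         distinct [x0, x1, y0, y1] \<and> 3 * x0 - y0 = 2 * y1 \<and> 3 * y0 - x0 = 2 * x1 \<and>
         map_poly to_ac (pderiv f) =
           smult (to_ac a') ([:-x0, 1:] ^ (2 * t0 + 1) * [:-x1, 1:] ^ t0 *
             [:-y0, 1:] ^ (2 * t1 + 1) * [:-y1, 1:] ^ t1))"
proof (cases "degree h \<le> 2")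
  case False
  then have "degree h \<ge> 3"
    by simp
  define G H where "G = map_poly to_ac g" and "H = map_poly to_ac h"
  interpret critical_decomposition G H
    unfolding G_def H_def using critical_decomposition_to_ac two_crit at_most_two t_gt \<open>degree h \<ge> 3\<close>
    unfolding decomp by blast
  define a where "a = lead_coeff (pderiv g) * lead_coeff h ^ degree g"
  have leading_factor: "lead_coeff (pderiv G) * lead_coeff H ^ degree G = to_ac a"
    by (simp add: a_def G_def H_def coeff_map_poly flip: map_poly_to_ac_pderiv)
  have transfer: "3 * to_ac a = to_ac (3 * a)" "pderiv (G \<circ>\<^sub>p H) = map_poly to_ac (pderiv f)"
    "degree G = degree g" "degree H = degree h"
    by (simp_all add: G_def H_def decomp map_poly_to_ac_pderiv map_poly_to_ac_pcompose)
  show ?thesis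
  proof (cases rule: critical_points_G_cases)
    case (1 c)
    show ?thesis
      using pderiv_composition_single_critical_point[OF 1] \<open>degree h \<ge> 3\<close>
      unfolding leading_factor unfolding transfer by blast
  next
    case (2 c1 c2)
    show ?thesis
      using pderiv_composition_two_critical_points[OF 2] \<open>degree H = 3\<close>
      unfolding leading_factor unfolding transfer by blast
  qed
qed simp

end
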